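(* Every tree in $\mathcal{O}'$ belongs to $\mathcal{O}$, and $\mathcal{O}'\neq\mathcal{O}$; in fact the path $P_{10}$ belongs to $\mathcal{O}$ but not to $\mathcal{O}'$.
   Context: Family $\mathcal{O}$ (labeled trees, each vertex has status $A$ or $B$): it contains the path $P_6$ whose two central vertices have status $A$ and other four vertices status $B$; and it is closed under: Operation $\mathcal{O}_1$: for a path $xyz$ with $x,y$ of status $B$ and $z$ of status $A$, add a new path $abc$ and edge $za$ with statuses $a\colon A$, $b\colon B$, $c\colon B$; Operation $\mathcal{O}_2$: for an edge $xy$ with $x,y$ of status $B$, add a new path $abcd$ and edge $dx$ with statuses $a\colon B$, $b\colon B$, $c\colon A$, $d\colon A$. An unlabeled tree is in $\mathcal{O}$ if it is the underlying tree of a labeled tree in $\mathcal{O}$. $2$-subdivision: let $G$ be a connected graph of order at least $2$ and $\mathcal{P}=\{\mathcal{P}(v):v\in V(G)\}$ where $\mathcal{P}(v)$ is a partition of $N_G(v)$ (into nonempty blocks). $G(\mathcal{P})$ has vertex set $V(G)\cup(V(G)\times\{1\})\cup\bigcup_{v\in V(G)}(\{v\}\times\mathcal{P}(v))$ and edge set $E_1\cup E_2\cup E_3$, where $E_1=\{v(v,1):v\in V(G)\}$, $E_2=\{v(v,A): v\in V(G), A\in\mathcal{P}(v)\}$, and $E_3=\{(u,A)(v,B): uv\in E(G), A\in\mathcal{P}(u), B\in\mathcal{P}(v), v\in A, u\in B\}$. (Intuitively: subdivide each inner edge of the corona $G\circ K_1$ twice, then for each $v$ and each block $A\in\mathcal{P}(v)$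 merge the new vertices adjacent to $v$ on the edges $vw$, $w\in A$, into one vertex.) $\mathcal{O}'$ is the family of all trees $T(\mathcal{P})$ where $T$ is a tree of order at least $2$ and $\mathcal{P}$ is such a family of partitions. *)

theory Defs
  imports Main
begin

definition is_graph :: "'a set \<Rightarrow> 'a set set \<Rightarrow> bool" where
  "is_graph V E \<longleftrightarrow> (\<forall>e\<in>E. \<exists>u v. u \<noteq> v \<and> u \<in> V \<and> v \<in> V \<and> e = {u, v})"

definition connected_graph :: "'a set \<Rightarrow> 'a set set \<Rightarrow> bool" where
  "connected_graph V E \<longleftrightarrow>
     (\<forall>u\<in>V. \<forall>v\<in>V. (u, v) \<in> {(x, y). {x, y} \<in> E}\<^sup>*)"

definition is_tree :: "'a set \<Rightarrow> 'a set set \<Rightarrow> bool" where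
  "is_tree V E \<longleftrightarrow> finite V \<and> V \<noteq> {} \<and> is_graph V E \<and> connected_graph V E
                    \<and> card E + 1 = card V"

definition graph_iso :: "'a set \<Rightarrow> 'a set set \<Rightarrow> 'b set \<Rightarrow> 'b set set \<Rightarrow> bool" where
  "graph_iso V E V' E' \<longleftrightarrow> is_graph V E \<and> is_graph V' E' \<and>
     (\<exists>f. bij_betw f V V' \<and> (\<forall>u\<in>V. \<forall>v\<in>V. {u, v} \<in> E \<longleftrightarrow> {f u, f v} \<in> E'))"

definition nbhd :: "'a set set \<Rightarrow> 'a \<Rightarrow> 'a set" where
  "nbhd E v = {u. {v, u} \<in> E}"

text \<open>Labeled trees of family O. Vertices are naturals; the label function
  gives True for status A and False for status B.\<close>

definition P6_lab :: "nat set \<times> nat set set \<times> (nat \<Rightarrow> bool)" where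
  "P6_lab = ({0..5}, {{i, Suc i} | i. i < 5}, (\<lambda>i. i = 2 \<or> i = 3))"

inductive_set famO_lab :: "(nat set \<times> nat set set \<times> (nat \<Rightarrow> bool)) set" where
  base: "P6_lab \<in> famO_lab"
| op1: "\<lbrakk> (V, E, L) \<in> famO_lab; x \<in> V; y \<in> V; z \<in> V; {x, y} \<in> E; {y, z} \<in> E;
          \<not> L x; \<not> L y; L z;
          a \<notin> V; b \<notin> V; c \<notin> V; a \<noteq> b; a \<noteq> c; b \<noteq> c \<rbrakk> \<Longrightarrow>
        (V \<union> {a, b, c}, E \<union> {{z, a}, {a, b}, {b, c}}, L(a := True, b := False, c := False))
          \<in> famO_lab"
| op2: "\<lbrakk> (V, E, L) \<in> famO_lab; x \<in> V; y \<in> V; {x, y} \<in> E; \<not> L x; \<not> L y;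
          a \<notin> V; b \<notin> V; c \<notin> V; d \<notin> V; a \<noteq> b; a \<noteq> c; a \<noteq> d; b \<noteq> c; b \<noteq> d; c \<noteq> d \<rbrakk> \<Longrightarrow>
        (V \<union> {a, b, c, d}, E \<union> {{a, b}, {b, c}, {c, d}, {d, x}},
           L(a := False, b := False, c := True, d := True)) \<in> famO_lab"

definition in_famO :: "'a set \<Rightarrow> 'a set set \<Rightarrow> bool" where
  "in_famO V E \<longleftrightarrow> is_tree V E \<and> (\<exists>V' E' L. (V', E', L) \<in> famO_lab \<and> graph_iso V' E' V E)"

datatype 'a sv = Orig 'a | Leaf 'a | Blk 'a "'a set"

definition is_partition :: "'a set set \<Rightarrow> 'a set \<Rightarrow> bool" where
  "is_partition P S \<longleftrightarrow> (\<forall>A\<in>P. A \<noteq> {} \<and> A \<subseteq> S) \<and> (\<forall>x\<in>S. \<exists>!A. A \<in> P \<and> x \<in> A)"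

definition subdiv_V :: "'a set \<Rightarrow> ('a \<Rightarrow> 'a set set) \<Rightarrow> 'a sv set" where
  "subdiv_V V P = Orig ` V \<union> Leaf ` V \<union> {Blk v A | v A. v \<in> V \<and> A \<in> P v}"

definition subdiv_E :: "'a set \<Rightarrow> 'a set set \<Rightarrow> ('a \<Rightarrow> 'a set set) \<Rightarrow> 'a sv set set" where
  "subdiv_E V E P =
     {{Orig v, Leaf v} | v. v \<in> V}
   \<union> {{Orig v, Blk v A} | v A. v \<in> V \<and> A \<in> P v}
   \<union> {{Blk u A, Blk v B} | u v A B. {u, v} \<in> E \<and> A \<in> P u \<and> B \<in> P v \<and> v \<in> A \<and> u \<in> B}"

definition in_famO' :: "'a set \<Rightarrow> 'a set set \<Rightarrow> bool" where
  "in_famO' V E \<longleftrightarrow> is_tree V E \<and>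
     (\<exists>(T :: nat set) ET P. is_tree T ET \<and> card T \<ge> 2 \<and>
        (\<forall>v\<in>T. is_partition (P v) (nbhd ET v)) \<and>
        graph_iso (subdiv_V T P) (subdiv_E T ET P) V E)"

definition P10_V :: "nat set" where "P10_V = {0..9}"
definition P10_E :: "nat set set" where "P10_E = {{i, Suc i} | i. i < 9}"

end

theory Submission
  imports Defs
begin

text \<open>
  Removing a leaf w of T with neighbour v, and deleting w from the block A of P(v) containing it
  (dropping the block if it becomes empty), gives a smaller instance T'(P'). Renaming the block vertex
  (v, A - {w}) of T'(P') back to (v, A) embeds T'(P') into T(P), and the vertices left over form the
  pendant path (w,{v}) - w - (w,1) hanging at (v, A), together with (v, A) itself when A = {w}.
  Give block vertices status A and all others status B. If A \<noteq> {w} the pendant path is added by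
  operation O1 at the path (v,1) - v - (v, A); if A = {w} the path (w,1) - w - (w,{v}) - (v,A) is
  added by operation O2 at the edge v - (v,1). Induction on |T|, starting from T(P) = P6 for |T| = 2,
  puts every T(P) into O; the vertices v, (v,1), (v,A) are encoded as Orig v, Leaf v, Blk v A.

  Conversely, the leaves of T(P) are exactly the vertices (v,1). Since P10 has only two leaves,
  P10 = T(P) forces |T| = 2 and hence |T(P)| = 6. One O2 step turns P6 into P10.
\<close>

section \<open>Graphs and trees\<close>

lemma is_graph_edgeD:
  assumes "is_graph V E" "{p, q} \<in> E"
  shows "p \<noteq> q \<and> p \<in> V \<and> q \<in> V"
  using assms unfolding is_graph_def by (auto simp: doubleton_eq_iff)

lemma is_graph_finite_edges:
  assumes "is_graph V E" "finite V"
  shows "finite E"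
proof -
  have "E \<subseteq> Pow V"
  proof
    fix e assume "e \<in> E"
    then obtain u v where "u \<in> V" "v \<in> V" "e = {u, v}"
      using assms(1) unfolding is_graph_def by blast
    then show "e \<in> Pow V" by simp
  qed
  then show ?thesis using assms(2) by (meson finite_Pow_iff finite_subset)
qed

lemma is_graph_insert_edge:
  "is_graph V E \<Longrightarrow> u \<noteq> v \<Longrightarrow> u \<in> V \<Longrightarrow> v \<in> V \<Longrightarrow> is_graph V (insert {u, v} E)"
  unfolding is_graph_def by (intro ballI) (metis insertE)

lemma is_graph_empty: "is_graph V {}"
  unfolding is_graph_def by simp

lemma is_graph_mono_vertices: "is_graph V E \<Longrightarrow> V \<subseteq> W \<Longrightarrow> is_graph W E"
  unfolding is_graph_def by (meson subsetD)

lemma nbhd_subset: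
  assumes "is_graph V E"
  shows "nbhd E x \<subseteq> V - {x}"
proof
  fix y assume "y \<in> nbhd E x"
  then show "y \<in> V - {x}" using is_graph_edgeD[OF assms, of x y] unfolding nbhd_def by auto
qed

lemma nbhd_sym: "y \<in> nbhd E x \<longleftrightarrow> x \<in> nbhd E y"
  unfolding nbhd_def by (simp add: insert_commute)

lemma incident_edges_eq_image_nbhd:
  assumes "is_graph V E"
  shows "{e \<in> E. x \<in> e} = (\<lambda>y. {x, y}) ` nbhd E x"
proof (intro equalityI subsetI)
  fix e assume e: "e \<in> {e \<in> E. x \<in> e}"
  then obtain p q where pq: "e = {p, q}"
    using assms unfolding is_graph_def by blast
  then obtain y where "e = {x, y}"
    using e by (metis doubleton_eq_iff insertE mem_Collect_eq singletonD)
  then show "e \<in> (\<lambda>y. {x, y}) ` nbhd E x"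
    using e unfolding nbhd_def by blast
qed (auto simp: nbhd_def)

lemma card_incident_edges:
  assumes "is_graph V E"
  shows "card {e \<in> E. x \<in> e} = card (nbhd E x)"
proof -
  have "inj_on (\<lambda>y. {x, y}) (nbhd E x)"
    by (rule inj_onI) (auto simp: doubleton_eq_iff)
  then have "card ((\<lambda>y. {x, y}) ` nbhd E x) = card (nbhd E x)"
    by (rule card_image)
  then show ?thesis
    by (simp only: incident_edges_eq_image_nbhd[OF assms])
qed

lemma handshake:
  assumes "is_graph V E" "finite V"
  shows "(\<Sum>x\<in>V. card (nbhd E x)) = 2 * card E"
proof -
  have fin: "finite E" using is_graph_finite_edges[OF assms] .
  have "(\<Sum>x\<in>V. card (nbhd E x)) = (\<Sum>x\<in>V. \<Sum>e\<in>E. if x \<in> e then 1 else 0)"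
    using card_incident_edges[OF assms(1)] sum.inter_filter[OF fin, of "\<lambda>_. 1::nat"]
    by (intro sum.cong) auto
  also have "\<dots> = (\<Sum>e\<in>E. \<Sum>x\<in>V. if x \<in> e then 1 else 0)"
    by (rule sum.swap)
  also have "\<dots> = (\<Sum>e\<in>E. 2)"
  proof (rule sum.cong)
    fix e assume "e \<in> E"
    then obtain u v where uv: "u \<noteq> v" "u \<in> V" "v \<in> V" "e = {u, v}"
      using assms(1) unfolding is_graph_def by blast
    then have "{x \<in> V. x \<in> e} = {u, v}" by auto
    then show "(\<Sum>x\<in>V. if x \<in> e then 1 else 0) = (2::nat)"
      using sum.inter_filter[OF assms(2), of "\<lambda>_. 1::nat" "\<lambda>x. x \<in> e"] uv(1) by simp
  qed simp
  finally show ?thesis by simp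
qed

lemma connected_graph_nbhd_nonempty:
  assumes "connected_graph V E" "x \<in> V" "u \<in> V" "u \<noteq> x"
  shows "nbhd E x \<noteq> {}"
proof -
  have "(x, u) \<in> {(a, b). {a, b} \<in> E}\<^sup>*"
    using assms unfolding connected_graph_def by blast
  then obtain y where "{x, y} \<in> E"
    using assms(4) by (auto elim: converse_rtranclE)
  then show ?thesis unfolding nbhd_def by blast
qed

lemma tree_has_leaf:
  assumes tree: "is_tree T ET" and two: "card T \<ge> 2"
  obtains w v where "w \<in> T" "v \<in> T" "v \<noteq> w" "nbhd ET w = {v}"
proof -
  have fin: "finite T" and g: "is_graph T ET" and con: "connected_graph T ET"
    and edges: "card ET + 1 = card T"
    using tree unfolding is_tree_def by auto
  have "\<exists>w\<in>T. card (nbhd ET w) < 2"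
  proof (rule ccontr)
    assume "\<not> ?thesis"
    then have "(\<Sum>x\<in>T. 2) \<le> (\<Sum>x\<in>T. card (nbhd ET x))"
      by (intro sum_mono) (simp add: not_less)
    then show False using handshake[OF g fin] edges by simp
  qed
  then obtain w where w: "w \<in> T" "card (nbhd ET w) < 2" by blast
  obtain u where "u \<in> T" "u \<noteq> w"
    using two w(1) by (metis card_le_Suc0_iff_eq fin not_less_eq_eq numeral_2_eq_2)
  then have "nbhd ET w \<noteq> {}" using connected_graph_nbhd_nonempty[OF con w(1)] by blast
  moreover have "finite (nbhd ET w)"
    using nbhd_subset[OF g] fin finite_subset by blast
  ultimately have "card (nbhd ET w) = 1"
    using w(2) by (simp add: card_gt_0_iff less_2_cases_iff)
  then obtain v where "nbhd ET w = {v}" by (rule card_1_singletonE)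
  moreover have "v \<in> T - {w}" using nbhd_subset[OF g, of w] calculation by blast
  ultimately show ?thesis using that w(1) by blast
qed

lemma leaf_edge_iff:
  assumes "nbhd E w = {v}"
  shows "{x, w} \<in> E \<longleftrightarrow> x = v"
proof -
  have "{x, w} \<in> E \<longleftrightarrow> x \<in> nbhd E w" unfolding nbhd_def by (simp add: insert_commute)
  then show ?thesis using assms by simp
qed

lemma is_graph_remove_leaf:
  assumes g: "is_graph T ET" and leaf: "nbhd ET w = {v}"
  shows "is_graph (T - {w}) (ET - {{v, w}})"
  unfolding is_graph_def
proof
  fix e assume e: "e \<in> ET - {{v, w}}"
  then obtain p q where pq: "p \<noteq> q" "p \<in> T" "q \<in> T" "e = {p, q}"
    using g unfolding is_graph_def by blast
  have "w \<notin> e"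
  proof
    assume "w \<in> e"
    then have "e = {p, w} \<or> e = {q, w}" using pq(4) by auto
    then show False using e leaf_edge_iff[OF leaf, of p] leaf_edge_iff[OF leaf, of q] by auto
  qed
  then show "\<exists>p q. p \<noteq> q \<and> p \<in> T - {w} \<and> q \<in> T - {w} \<and> e = {p, q}"
    using pq by blast
qed

lemma connected_graph_remove_leaf:
  assumes con: "connected_graph T ET" and leaf: "nbhd ET w = {v}" and "v \<noteq> w"
  shows "connected_graph (T - {w}) (ET - {{v, w}})"
proof -
  let ?R = "{(a, b). {a, b} \<in> ET}" and ?R' = "{(a, b). {a, b} \<in> ET - {{v, w}}}"
  \<comment> \<open>a walk from x \<noteq> w is shortcut by stopping at v instead of stepping onto the leaf w\<close>
  have walk: "(x, if y = w then v else y) \<in> ?R'\<^sup>*" if "(x, y) \<in> ?R\<^sup>*" "x \<noteq> w" for x y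
    using that(1)
  proof (induction rule: rtrancl_induct)
    case base then show ?case using that(2) by simp
  next
    case (step y z)
    have yz: "{y, z} \<in> ET" using step(2) by simp
    consider "z = w" | "y = w" | "y \<noteq> w" "z \<noteq> w" by blast
    then show ?case
    proof cases
      case 1
      then have "y = v" using yz leaf_edge_iff[OF leaf] by simp
      then show ?thesis using step.IH 1 \<open>v \<noteq> w\<close> by simp
    next
      case 2
      then have "z = v" using yz leaf_edge_iff[OF leaf, of z] by (simp add: insert_commute)
      then show ?thesis using step.IH 2 \<open>v \<noteq> w\<close> by simp
    next
      case 3
      then have "(y, z) \<in> ?R'" using yz by (auto simp: doubleton_eq_iff)
      then show ?thesis using step.IH 3 by (simp add: rtrancl_into_rtrancl)
    qed
  qed
  show ?thesis
    unfolding connected_graph_def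
  proof (intro ballI)
    fix x y assume "x \<in> T - {w}" "y \<in> T - {w}"
    then show "(x, y) \<in> ?R'\<^sup>*"
      using walk[of x y] con unfolding connected_graph_def by auto
  qed
qed

lemma tree_remove_leaf:
  assumes tree: "is_tree T ET" and "w \<in> T" "v \<in> T" "v \<noteq> w" and leaf: "nbhd ET w = {v}"
  shows "is_tree (T - {w}) (ET - {{v, w}})"
proof -
  have fin: "finite T" and g: "is_graph T ET" and con: "connected_graph T ET"
    and edges: "card ET + 1 = card T"
    using tree unfolding is_tree_def by auto
  have vw: "{v, w} \<in> ET" using leaf_edge_iff[OF leaf] by simp
  moreover have "finite ET" using is_graph_finite_edges[OF g fin] .
  ultimately have "card ET > 0" using card_gt_0_iff by blast
  then have "card (ET - {{v, w}}) + 1 = card (T - {w})"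
    using edges assms(2) fin vw by (simp add: card_Diff_singleton)
  then show ?thesis
    using assms is_graph_remove_leaf[OF g leaf] connected_graph_remove_leaf[OF con leaf assms(4)] fin
    unfolding is_tree_def by auto
qed

lemma is_partition_blockD:
  "is_partition P S \<Longrightarrow> A \<in> P \<Longrightarrow> A \<noteq> {} \<and> A \<subseteq> S"
  unfolding is_partition_def by simp

lemma is_partition_block_exists:
  "is_partition P S \<Longrightarrow> x \<in> S \<Longrightarrow> \<exists>A\<in>P. x \<in> A"
  unfolding is_partition_def by (metis (no_types, lifting))

lemma is_partition_block_unique:
  assumes "is_partition P S" "A \<in> P" "B \<in> P" "y \<in> A" "y \<in> B"
  shows "A = B"
proof -
  have "y \<in> S" using is_partition_blockD[OF assms(1,2)] assms(4) by blast
  then have "\<exists>!C. C \<in> P \<and> y \<in> C" using assms(1) unfolding is_partition_def by simp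
  then show ?thesis using assms(2-5) by blast
qed

lemma is_partition_singleton:
  assumes "is_partition Q {x}"
  shows "Q = {{x}}"
proof -
  have "B = {x}" if "B \<in> Q" for B
    using is_partition_blockD[OF assms that] by blast
  moreover obtain B where "B \<in> Q" using is_partition_block_exists[OF assms] by blast
  ultimately show ?thesis by blast
qed

lemma is_partition_remove:
  assumes p: "is_partition P S"
  shows "is_partition ((\<lambda>B. B - {w}) ` P - {{}}) (S - {w})" (is "is_partition ?P' _")
proof -
  have blocks: "A \<noteq> {} \<and> A \<subseteq> S - {w}" if A: "A \<in> ?P'" for A
  proof -
    obtain B where "B \<in> P" "A = B - {w}" "A \<noteq> {}" using A by blast
    then show ?thesis using is_partition_blockD[OF p] by blast
  qed
  have unique: "\<exists>!A. A \<in> ?P' \<and> x \<in> A" if x: "x \<in> S - {w}" for x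
  proof -
    obtain B where B: "B \<in> P" "x \<in> B" using is_partition_block_exists[OF p] x by blast
    show ?thesis
    proof (rule ex1I[of _ "B - {w}"])
      show "B - {w} \<in> ?P' \<and> x \<in> B - {w}" using B x by blast
    next
      fix A assume "A \<in> ?P' \<and> x \<in> A"
      then obtain B' where "B' \<in> P" "A = B' - {w}" "x \<in> B'" by blast
      then show "A = B - {w}" using is_partition_block_unique[OF p _ B(1) _ B(2)] by blast
    qed
  qed
  show ?thesis unfolding is_partition_def using blocks unique by simp
qed

section \<open>The 2-subdivision\<close>

fun subdiv_arc :: "'a set \<Rightarrow> 'a set set \<Rightarrow> ('a \<Rightarrow> 'a set set) \<Rightarrow> 'a sv \<Rightarrow> 'a sv \<Rightarrow> bool" where
  "subdiv_arc V E P (Orig v) (Leaf u) \<longleftrightarrow> v = u \<and> v \<in> V"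
| "subdiv_arc V E P (Orig v) (Blk u A) \<longleftrightarrow> v = u \<and> v \<in> V \<and> A \<in> P v"
| "subdiv_arc V E P (Blk u A) (Blk v B) \<longleftrightarrow> {u, v} \<in> E \<and> A \<in> P u \<and> B \<in> P v \<and> v \<in> A \<and> u \<in> B"
| "subdiv_arc V E P _ _ \<longleftrightarrow> False"

definition subdiv_adj :: "'a set \<Rightarrow> 'a set set \<Rightarrow> ('a \<Rightarrow> 'a set set) \<Rightarrow> 'a sv \<Rightarrow> 'a sv \<Rightarrow> bool" where
  "subdiv_adj V E P X Y \<longleftrightarrow> subdiv_arc V E P X Y \<or> subdiv_arc V E P Y X"

lemma subdiv_adj_sym: "subdiv_adj V E P X Y \<longleftrightarrow> subdiv_adj V E P Y X"
  unfolding subdiv_adj_def by blast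

lemma subdiv_E_iff: "{X, Y} \<in> subdiv_E V E P \<longleftrightarrow> subdiv_adj V E P X Y"
proof -
  have "{X, Y} \<in> subdiv_E V E P \<longleftrightarrow>
     (\<exists>v. v \<in> V \<and> {X, Y} = {Orig v, Leaf v}) \<or>
     (\<exists>v A. v \<in> V \<and> A \<in> P v \<and> {X, Y} = {Orig v, Blk v A}) \<or>
     (\<exists>u v A B. {u, v} \<in> E \<and> A \<in> P u \<and> B \<in> P v \<and> v \<in> A \<and> u \<in> B \<and> {X, Y} = {Blk u A, Blk v B})"
    unfolding subdiv_E_def by blast
  also have "\<dots> \<longleftrightarrow> subdiv_adj V E P X Y"
    unfolding subdiv_adj_def doubleton_eq_iff
    by (cases X; cases Y) (auto simp: insert_commute)
  finally show ?thesis .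
qed

lemma subdiv_V_simps [simp]:
  "Orig x \<in> subdiv_V V P \<longleftrightarrow> x \<in> V"
  "Leaf x \<in> subdiv_V V P \<longleftrightarrow> x \<in> V"
  "Blk x B \<in> subdiv_V V P \<longleftrightarrow> x \<in> V \<and> B \<in> P x"
  unfolding subdiv_V_def by auto

fun is_Blk :: "'a sv \<Rightarrow> bool" where
  "is_Blk (Blk _ _) = True"
| "is_Blk _ = False"

lemma subdiv_adj_Leaf: "subdiv_adj V E P (Leaf t) X \<Longrightarrow> X = Orig t"
  unfolding subdiv_adj_def by (cases X) auto

lemma subdiv_of_edge:
  assumes tree: "is_tree T ET" and T: "T = {u, w}" "u \<noteq> w"
    and part: "\<forall>x\<in>T. is_partition (P x) (nbhd ET x)"
  shows "ET = {{u, w}}" "P u = {{w}}" "P w = {{u}}"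
    and "subdiv_V T P = {Leaf u, Orig u, Blk u {w}, Blk w {u}, Orig w, Leaf w}"
proof -
  have g: "is_graph T ET" and "card ET + 1 = card T" using tree unfolding is_tree_def by auto
  then have "card ET = 1" using T by simp
  then obtain e where e: "ET = {e}" using card_1_singletonE by blast
  then obtain p q where "p \<noteq> q" "p \<in> T" "q \<in> T" "e = {p, q}"
    using g unfolding is_graph_def by blast
  then show ET: "ET = {{u, w}}" using e T by (auto simp: doubleton_eq_iff)
  have "nbhd ET u = {w}" "nbhd ET w = {u}"
    unfolding ET nbhd_def using T(2) by (auto simp: doubleton_eq_iff)
  then show Pu: "P u = {{w}}" and Pw: "P w = {{u}}"
    using part T(1) is_partition_singleton[of "P u" w] is_partition_singleton[of "P w" u] by auto
  show "subdiv_V T P = {Leaf u, Orig u, Blk u {w}, Blk w {u}, Orig w, Leaf w}"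
  proof (intro equalityI subsetI)
    fix X assume "X \<in> subdiv_V T P"
    then show "X \<in> {Leaf u, Orig u, Blk u {w}, Blk w {u}, Orig w, Leaf w}"
      using T Pu Pw by (cases X) auto
  qed (use T Pu Pw in auto)
qed

section \<open>The family O\<close>

lemma P6_lab_eq:
  "P6_lab = ({0, 1, 2, 3, 4, 5}, {{0, 1}, {1, 2}, {2, 3}, {3, 4}, {4, 5}}, \<lambda>i. i = 2 \<or> i = 3)"
proof -
  have "{0..5::nat} = {0, 1, 2, 3, 4, 5}"
    by (simp add: atLeast0AtMost atMost_nat_numeral atMost_Suc insert_commute)
  moreover have "{{i, Suc i} | i. i < 5} = (\<lambda>i. {i, Suc i}) ` {..<5::nat}" by blast
  moreover have "{..<5::nat} = {0, 1, 2, 3, 4}"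
    by (simp add: lessThan_nat_numeral lessThan_Suc insert_commute)
  ultimately show ?thesis unfolding P6_lab_def by (simp add: eval_nat_numeral)
qed

lemma famO_lab_graph: "(V, E, L) \<in> famO_lab \<Longrightarrow> finite V \<and> is_graph V E"
proof (induction rule: famO_lab.induct[split_format(complete)])
  case base
  have "is_graph {0, 1, 2, 3, 4, 5::nat} {{0, 1}, {1, 2}, {2, 3}, {3, 4}, {4, 5}}"
    by (intro is_graph_insert_edge is_graph_empty) auto
  then show ?case unfolding P6_lab_eq by simp
next
  case (op1 V E L x y z a b c)
  then have "is_graph (V \<union> {a, b, c}) E" using is_graph_mono_vertices by blast
  then have "is_graph (V \<union> {a, b, c}) (insert {z, a} (insert {a, b} (insert {b, c} E)))"
    using op1 by (intro is_graph_insert_edge) auto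
  then show ?case using op1 by simp
next
  case (op2 V E L x y a b c d)
  then have "is_graph (V \<union> {a, b, c, d}) E" using is_graph_mono_vertices by blast
  then have "is_graph (V \<union> {a, b, c, d}) (insert {a, b} (insert {b, c} (insert {c, d} (insert {d, x} E))))"
    using op2 by (intro is_graph_insert_edge) auto
  then show ?case using op2 by simp
qed

lemma notin_above_Max: "finite V \<Longrightarrow> Max V < k \<Longrightarrow> k \<notin> V"
  using Max_ge leD by blast

definition subdiv_repr ::
    "'a set \<Rightarrow> 'a set set \<Rightarrow> ('a \<Rightarrow> 'a set set) \<Rightarrow> 'b set \<Rightarrow> 'b set set \<Rightarrow> ('b \<Rightarrow> bool) \<Rightarrow> ('b \<Rightarrow> 'a sv) \<Rightarrow> bool" where
  "subdiv_repr T ET P V E L f \<longleftrightarrow> bij_betw f V (subdiv_V T P) \<and>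
     (\<forall>p\<in>V. \<forall>q\<in>V. {p, q} \<in> E \<longleftrightarrow> subdiv_adj T ET P (f p) (f q)) \<and> (\<forall>p\<in>V. L p \<longleftrightarrow> is_Blk (f p))"

lemma subdiv_repr_edge:
  assumes tree: "is_tree T ET" and two: "card T = 2"
    and part: "\<forall>x\<in>T. is_partition (P x) (nbhd ET x)"
  shows "\<exists>V E L f. (V, E, L) \<in> famO_lab \<and> subdiv_repr T ET P V E L f"
proof -
  obtain u w where T: "T = {u, w}" "u \<noteq> w" using two unfolding card_2_iff by auto
  note K2 = subdiv_of_edge[OF tree T part]
  define f where "f i = [Leaf u, Orig u, Blk u {w}, Blk w {u}, Orig w, Leaf w] ! i" for i
  have "inj_on f {0, 1, 2, 3, 4, 5}"
    unfolding inj_on_def f_def using T(2) by simp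
  moreover have "f ` {0, 1, 2, 3, 4, 5} = subdiv_V T P"
    unfolding K2(4) f_def by simp
  moreover have "\<forall>p\<in>{0, 1, 2, 3, 4, 5}. \<forall>q\<in>{0, 1, 2, 3, 4, 5}.
      {p, q} \<in> {{0, 1}, {1, 2}, {2, 3}, {3, 4}, {4, 5::nat}} \<longleftrightarrow> subdiv_adj T ET P (f p) (f q)"
    unfolding f_def subdiv_adj_def using T by (simp add: K2(1-3) doubleton_eq_iff)
  moreover have "\<forall>p\<in>{0, 1, 2, 3, 4, 5::nat}. (p = 2 \<or> p = 3) \<longleftrightarrow> is_Blk (f p)"
    unfolding f_def by simp
  ultimately have "subdiv_repr T ET P {0, 1, 2, 3, 4, 5} {{0, 1}, {1, 2}, {2, 3}, {3, 4}, {4, 5}}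
      (\<lambda>i. i = 2 \<or> i = 3) f"
    unfolding subdiv_repr_def bij_betw_def by blast
  then show ?thesis using famO_lab.base unfolding P6_lab_eq by blast
qed

lemma graph_iso_of_subdiv_repr:
  assumes repr: "subdiv_repr T ET P V E L f" and graph: "is_graph V E"
    and iso: "graph_iso (subdiv_V T P) (subdiv_E T ET P) W F"
  shows "graph_iso V E W F"
proof -
  obtain \<phi> where \<phi>: "bij_betw \<phi> (subdiv_V T P) W"
    and edges: "\<forall>X\<in>subdiv_V T P. \<forall>Y\<in>subdiv_V T P. {X, Y} \<in> subdiv_E T ET P \<longleftrightarrow> {\<phi> X, \<phi> Y} \<in> F"
    and "is_graph W F"
    using iso unfolding graph_iso_def by blast
  have f: "bij_betw f V (subdiv_V T P)"
    and adj: "\<forall>p\<in>V. \<forall>q\<in>V. {p, q} \<in> E \<longleftrightarrow> subdiv_adj T ET P (f p) (f q)"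
    using repr unfolding subdiv_repr_def by auto
  have "{p, q} \<in> E \<longleftrightarrow> {(\<phi> \<circ> f) p, (\<phi> \<circ> f) q} \<in> F" if "p \<in> V" "q \<in> V" for p q
  proof -
    have "{p, q} \<in> E \<longleftrightarrow> {f p, f q} \<in> subdiv_E T ET P"
      using that adj subdiv_E_iff[of "f p" "f q" T ET P] by simp
    also have "\<dots> \<longleftrightarrow> {\<phi> (f p), \<phi> (f q)} \<in> F"
      using that edges bij_betw_apply[OF f] by simp
    finally show ?thesis by simp
  qed
  then show ?thesis
    unfolding graph_iso_def using graph \<open>is_graph W F\<close> bij_betw_trans[OF f \<phi>] by blast
qed

section \<open>Removing a leaf\<close>

locale pendant_leaf =
  fixes T :: "'a set" and ET :: "'a set set" and P :: "'a \<Rightarrow> 'a set set"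
    and w v :: 'a and A :: "'a set"
  assumes tree: "is_tree T ET" and w_in: "w \<in> T" and v_ne_w: "v \<noteq> w"
    and leaf: "nbhd ET w = {v}"
    and part: "\<forall>x\<in>T. is_partition (P x) (nbhd ET x)"
    and A_block: "A \<in> P v" and w_in_A: "w \<in> A"
begin

lemma graph: "is_graph T ET"
  using tree unfolding is_tree_def by simp

lemma v_in: "v \<in> T"
  using nbhd_subset[OF graph, of w] leaf by blast

lemma edge_vw: "{v, w} \<in> ET"
  using leaf_edge_iff[OF leaf] by simp

lemma block_containing_w:
  assumes "x \<in> T" "B \<in> P x" "w \<in> B"
  shows "x = v \<and> B = A"
proof -
  have "w \<in> nbhd ET x" using is_partition_blockD[OF bspec[OF part assms(1)] assms(2)] assms(3) by blast
  then have "x = v" using leaf nbhd_sym by (metis singletonD)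
  then show ?thesis
    using is_partition_block_unique[OF bspec[OF part v_in] A_block _ w_in_A] assms(2,3) by blast
qed

lemma P_w: "P w = {{v}}"
  using is_partition_singleton part w_in leaf by metis

lemma adj_Leaf_w: "subdiv_adj T ET P Y (Leaf w) \<longleftrightarrow> Y = Orig w"
  unfolding subdiv_adj_def by (cases Y) (auto simp: w_in)

lemma adj_Orig_w: "subdiv_adj T ET P Y (Orig w) \<longleftrightarrow> Y = Leaf w \<or> Y = Blk w {v}"
  unfolding subdiv_adj_def by (cases Y) (auto simp: w_in P_w)

lemma adj_Blk_w: "subdiv_adj T ET P Y (Blk w {v}) \<longleftrightarrow> Y = Orig w \<or> Y = Blk v A"
proof (cases Y)
  case (Blk y C)
  have "subdiv_adj T ET P Y (Blk w {v}) \<longleftrightarrow> y = v \<and> C \<in> P y \<and> w \<in> C"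
    unfolding subdiv_adj_def using Blk edge_vw by (auto simp: P_w insert_commute)
  also have "\<dots> \<longleftrightarrow> y = v \<and> C = A"
    using block_containing_w[of y C] v_in A_block w_in_A by blast
  finally show ?thesis using Blk by simp
qed (auto simp: subdiv_adj_def w_in P_w)

lemma adj_Blk_v:
  assumes "A = {w}"
  shows "subdiv_adj T ET P Y (Blk v A) \<longleftrightarrow> Y = Orig v \<or> Y = Blk w {v}"
proof (cases Y)
  case (Blk y C)
  have "subdiv_adj T ET P Y (Blk v A) \<longleftrightarrow> y = w \<and> C \<in> P w \<and> v \<in> C"
    unfolding subdiv_adj_def using Blk edge_vw A_block assms by (auto simp: insert_commute)
  then show ?thesis using Blk P_w by auto
qed (use v_in A_block in \<open>auto simp: subdiv_adj_def\<close>)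

definition "T' = T - {w}"
definition "ET' = ET - {{v, w}}"
definition "P' = P(v := (\<lambda>B. B - {w}) ` P v - {{}})"
definition "A0 = A - {w}"

lemma nbhd_reduced:
  assumes "x \<noteq> w"
  shows "nbhd ET' x = nbhd ET x - {w}"
proof -
  have "{x, y} \<noteq> {v, w} \<longleftrightarrow> y \<noteq> w" if "{x, y} \<in> ET" for y
    using assms leaf_edge_iff[OF leaf, of x] that by (auto simp: doubleton_eq_iff)
  then show ?thesis unfolding nbhd_def ET'_def by blast
qed

lemma tree_reduced: "is_tree T' ET'"
  unfolding T'_def ET'_def using tree_remove_leaf[OF tree w_in v_in v_ne_w leaf] .

lemma card_reduced: "card T' = card T - 1"
  unfolding T'_def using w_in by simp

lemma partition_reduced: "\<forall>x\<in>T'. is_partition (P' x) (nbhd ET' x)"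
proof
  fix x assume "x \<in> T'"
  then have x: "x \<in> T" "x \<noteq> w" unfolding T'_def by auto
  show "is_partition (P' x) (nbhd ET' x)"
  proof (cases "x = v")
    case True
    then show ?thesis
      using is_partition_remove[OF bspec[OF part v_in]] nbhd_reduced[OF x(2)] unfolding P'_def by simp
  next
    case False
    then have "w \<notin> nbhd ET x" using leaf nbhd_sym by (metis singletonD)
    then show ?thesis using part x False nbhd_reduced[OF x(2)] unfolding P'_def by simp
  qed
qed

lemma blocks_reduced_v: "B \<in> P' v \<longleftrightarrow> B \<noteq> {} \<and> (B = A0 \<or> B \<in> P v \<and> B \<noteq> A)"
proof
  assume "B \<in> P' v"
  then obtain C where C: "C \<in> P v" "B = C - {w}" "B \<noteq> {}" unfolding P'_def by auto
  show "B \<noteq> {} \<and> (B = A0 \<or> B \<in> P v \<and> B \<noteq> A)"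
  proof (cases "C = A")
    case False
    then have "w \<notin> C" using block_containing_w[OF v_in C(1)] by blast
    then show ?thesis using C False by simp
  qed (use C A0_def in simp)
next
  assume B: "B \<noteq> {} \<and> (B = A0 \<or> B \<in> P v \<and> B \<noteq> A)"
  moreover have "B - {w} = B" if "B \<in> P v" "B \<noteq> A"
    using block_containing_w[OF v_in that(1)] that(2) by blast
  ultimately show "B \<in> P' v" unfolding P'_def A0_def using A_block by force
qed

lemma blocks_reduced_other: "x \<noteq> v \<Longrightarrow> P' x = P x"
  unfolding P'_def by simp

lemma w_notin_block_reduced: "B \<in> P' v \<Longrightarrow> w \<notin> B"
  unfolding P'_def by auto

definition "lift_block x B = (if x = v \<and> B = A0 then A else B)"

definition "rho X = (if X = Blk v A0 then Blk v A else X)"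

definition "pendant = {Leaf w, Orig w, Blk w {v}} \<union> (if A = {w} then {Blk v A} else {})"

lemma pendant_iff:
  "Y \<in> pendant \<longleftrightarrow> Y = Leaf w \<or> Y = Orig w \<or> Y = Blk w {v} \<or> (A = {w} \<and> Y = Blk v A)"
  unfolding pendant_def by auto

lemma adj_pendant_outside:
  assumes "Y \<notin> pendant"
  shows "\<not> subdiv_adj T ET P Y (Leaf w)" "\<not> subdiv_adj T ET P Y (Orig w)"
    and "subdiv_adj T ET P Y (Blk w {v}) \<longleftrightarrow> Y = Blk v A"
    and "A = {w} \<Longrightarrow> subdiv_adj T ET P Y (Blk v A) \<longleftrightarrow> Y = Orig v"
  using assms unfolding pendant_iff adj_Leaf_w adj_Orig_w adj_Blk_w
  by (blast, blast, blast, metis adj_Blk_v)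

lemma rho_simps [simp]:
  "rho (Orig x) = Orig x" "rho (Leaf x) = Leaf x"
  "rho (Blk x B) = Blk x (lift_block x B)"
  unfolding rho_def lift_block_def by simp_all

lemma is_Blk_rho: "is_Blk (rho X) = is_Blk X"
  unfolding rho_def by (cases X) auto

lemma lift_block_in: "B \<in> P' x \<Longrightarrow> lift_block x B \<in> P x"
  unfolding lift_block_def using A_block blocks_reduced_v blocks_reduced_other by (cases "x = v") auto

lemma lift_block_mem: "y \<noteq> w \<Longrightarrow> y \<in> lift_block x B \<longleftrightarrow> y \<in> B"
  unfolding lift_block_def A0_def by auto

lemma A0_not_block: "A0 \<notin> P v"
proof
  assume A0: "A0 \<in> P v"
  then obtain y where "y \<in> A0" using is_partition_blockD part v_in by blast
  then have "A0 = A"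
    using is_partition_block_unique[OF bspec[OF part v_in] A0 A_block] A0_def by blast
  then show False using w_in_A A0_def by blast
qed

lemma rho_eq_Blk_v_A:
  assumes "X \<in> subdiv_V T' P'"
  shows "rho X = Blk v A \<longleftrightarrow> X = Blk v A0"
proof
  assume "rho X = Blk v A"
  moreover have "X \<noteq> Blk v A" using assms w_notin_block_reduced w_in_A by auto
  ultimately show "X = Blk v A0" unfolding rho_def by (auto split: if_splits)
qed (simp add: rho_def)

lemma inj_on_rho: "inj_on rho (subdiv_V T' P')"
proof (rule inj_onI)
  fix X Y assume XY: "X \<in> subdiv_V T' P'" "Y \<in> subdiv_V T' P'" "rho X = rho Y"
  show "X = Y"
  proof (cases "rho X = Blk v A")
    case True
    then show ?thesis using rho_eq_Blk_v_A XY by metis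
  next
    case False
    then show ?thesis using XY unfolding rho_def by (auto split: if_splits)
  qed
qed

lemma rho_in_subdiv: "X \<in> subdiv_V T' P' \<Longrightarrow> rho X \<in> subdiv_V T P - pendant"
proof (cases X)
  case (Blk x B)
  assume "X \<in> subdiv_V T' P'"
  then have x: "x \<in> T" "x \<noteq> w" "B \<in> P' x" using Blk by (simp_all add: T'_def)
  have "lift_block x B \<in> P x" using lift_block_in x(3) .
  then have "rho X \<in> subdiv_V T P" using Blk x by simp
  moreover have "rho X \<noteq> Blk v A" if "A = {w}"
  proof -
    have "A0 \<notin> P' v" using that blocks_reduced_v A0_def by simp
    then show ?thesis
      using rho_eq_Blk_v_A[OF \<open>X \<in> subdiv_V T' P'\<close>] Blk x(3) by auto
  qed
  moreover have "rho X \<noteq> Leaf w \<and> rho X \<noteq> Orig w \<and> rho X \<noteq> Blk w {v}"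
    using Blk x(2) by simp
  ultimately have "rho X \<notin> pendant" unfolding pendant_iff by blast
  then show ?thesis using \<open>rho X \<in> subdiv_V T P\<close> by blast
qed (simp_all add: T'_def pendant_iff)

lemma rho_onto_outside_pendant:
  assumes Y: "Y \<in> subdiv_V T P - pendant"
  shows "\<exists>X\<in>subdiv_V T' P'. rho X = Y"
proof (cases Y)
  case (Orig x)
  then have "Orig x \<in> subdiv_V T' P'" using Y by (simp add: pendant_iff T'_def)
  then show ?thesis using Orig by (intro bexI[of _ "Orig x"]) simp_all
next
  case (Leaf x)
  then have "Leaf x \<in> subdiv_V T' P'" using Y by (simp add: pendant_iff T'_def)
  then show ?thesis using Leaf by (intro bexI[of _ "Leaf x"]) simp_all
next
  case (Blk x B)
  then have x: "x \<in> T" "B \<in> P x" "Y \<notin> pendant" using Y by auto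
  have "x \<noteq> w"
  proof
    assume "x = w"
    then have "Y = Blk w {v}" using Blk x(2) P_w by simp
    then show False using x(3) pendant_iff by blast
  qed
  show ?thesis
  proof (cases "x = v \<and> B = A")
    case True
    then have "A \<noteq> {w}" using x(3) Blk pendant_iff by blast
    then have "A0 \<in> P' v" using blocks_reduced_v A0_def w_in_A by auto
    then have "Blk v A0 \<in> subdiv_V T' P'" using v_in v_ne_w by (simp add: T'_def)
    then show ?thesis using True Blk by (intro bexI[of _ "Blk v A0"]) (simp_all add: lift_block_def)
  next
    case False
    moreover have "B \<noteq> {}" using is_partition_blockD part x(1,2) by blast
    ultimately have "B \<in> P' x \<and> (B \<noteq> A0 \<or> x \<noteq> v)"
      using False x(2) blocks_reduced_v[of B] blocks_reduced_other[of x] A0_not_block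
      by (cases "x = v") auto
    then have "Blk x B \<in> subdiv_V T' P'" "rho (Blk x B) = Y"
      using x \<open>x \<noteq> w\<close> Blk by (auto simp: T'_def lift_block_def)
    then show ?thesis by blast
  qed
qed

lemma rho_image: "rho ` subdiv_V T' P' = subdiv_V T P - pendant"
proof (intro equalityI subsetI)
  fix Y assume "Y \<in> rho ` subdiv_V T' P'"
  then show "Y \<in> subdiv_V T P - pendant" using rho_in_subdiv by blast
next
  fix Y assume "Y \<in> subdiv_V T P - pendant"
  then show "Y \<in> rho ` subdiv_V T' P'" using rho_onto_outside_pendant by blast
qed

lemma edge_reduced_iff: "x \<noteq> w \<Longrightarrow> y \<noteq> w \<Longrightarrow> {x, y} \<in> ET' \<longleftrightarrow> {x, y} \<in> ET"
  unfolding ET'_def by (auto simp: doubleton_eq_iff)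

lemma arc_rho:
  assumes X: "X \<in> subdiv_V T' P'" and Y: "Y \<in> subdiv_V T' P'"
  shows "subdiv_arc T' ET' P' X Y \<longleftrightarrow> subdiv_arc T ET P (rho X) (rho Y)"
proof (cases X; cases Y)
  fix x y B assume XY: "X = Orig x" "Y = Blk y B"
  then show ?thesis using X Y lift_block_in by (auto simp: T'_def)
next
  fix x y B C assume XY: "X = Blk x B" "Y = Blk y C"
  then have xy: "x \<in> T'" "y \<in> T'" "B \<in> P' x" "C \<in> P' y" using X Y by simp_all
  then have "x \<noteq> w" "y \<noteq> w" by (simp_all add: T'_def)
  then show ?thesis
    using XY xy lift_block_in lift_block_mem edge_reduced_iff by simp
qed (use X Y in \<open>auto simp: T'_def\<close>)

lemma adj_rho:
  "X \<in> subdiv_V T' P' \<Longrightarrow> Y \<in> subdiv_V T' P' \<Longrightarrow>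
    subdiv_adj T' ET' P' X Y \<longleftrightarrow> subdiv_adj T ET P (rho X) (rho Y)"
  unfolding subdiv_adj_def using arc_rho by blast

lemma pendant_subset: "pendant \<subseteq> subdiv_V T P"
  using w_in v_in A_block P_w unfolding pendant_def by auto

lemma subdiv_repr_reduced_inj:
  assumes "subdiv_repr T' ET' P' V' E' L f" "p \<in> V'" "q \<in> V'"
  shows "rho (f p) = rho (f q) \<longleftrightarrow> p = q"
proof -
  have f: "bij_betw f V' (subdiv_V T' P')" using assms(1) unfolding subdiv_repr_def by blast
  have "inj_on (rho \<circ> f) V'"
    using comp_inj_on[OF bij_betw_imp_inj_on[OF f]] inj_on_rho bij_betw_imp_surj_on[OF f] by simp
  then show ?thesis using assms(2,3) unfolding inj_on_def by auto
qed

lemma subdiv_repr_rho_outside: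
  assumes "subdiv_repr T' ET' P' V' E' L f" "p \<in> V'"
  shows "rho (f p) \<notin> pendant"
proof -
  have "f p \<in> subdiv_V T' P'"
    using assms bij_betw_apply unfolding subdiv_repr_def by metis
  then show ?thesis using rho_in_subdiv by blast
qed

lemma bij_betw_extend_rho:
  assumes f: "bij_betw f V' (subdiv_V T' P')" and h: "bij_betw h N pendant"
    and disj: "V' \<inter> N = {}"
  shows "bij_betw (\<lambda>p. if p \<in> N then h p else rho (f p)) (V' \<union> N) (subdiv_V T P)"
    (is "bij_betw ?g _ _")
proof -
  have "bij_betw (rho \<circ> f) V' (subdiv_V T P - pendant)"
    using bij_betw_trans[OF f inj_on_imp_bij_betw[OF inj_on_rho]] rho_image by simp
  then have "bij_betw ?g V' (subdiv_V T P - pendant)"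
    by (rule bij_betw_cong[THEN iffD1, rotated]) (use disj in auto)
  moreover have "bij_betw ?g N pendant"
    using h by (rule bij_betw_cong[THEN iffD1, rotated]) simp
  ultimately have "bij_betw ?g (V' \<union> N) (subdiv_V T P - pendant \<union> pendant)"
    by (rule bij_betw_combine) blast
  then show ?thesis using pendant_subset by (simp add: Un_absorb2)
qed

lemma subdiv_repr_extend:
  assumes repr: "subdiv_repr T' ET' P' V' E' L f" and graph': "is_graph V' E'"
    and h: "bij_betw h N pendant" and disj: "V' \<inter> N = {}"
    and old: "\<And>p q. p \<in> V' \<Longrightarrow> q \<in> V' \<Longrightarrow> {p, q} \<notin> F"
    and cross: "\<And>p q. p \<in> V' \<Longrightarrow> q \<in> N \<Longrightarrow> {p, q} \<in> F \<longleftrightarrow> subdiv_adj T ET P (rho (f p)) (h q)"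
    and new: "\<And>p q. p \<in> N \<Longrightarrow> q \<in> N \<Longrightarrow> {p, q} \<in> F \<longleftrightarrow> subdiv_adj T ET P (h p) (h q)"
    and label_old: "\<And>p. p \<in> V' \<Longrightarrow> L2 p = L p"
    and label_new: "\<And>p. p \<in> N \<Longrightarrow> L2 p \<longleftrightarrow> is_Blk (h p)"
  shows "subdiv_repr T ET P (V' \<union> N) (E' \<union> F) L2 (\<lambda>p. if p \<in> N then h p else rho (f p))"
    (is "subdiv_repr _ _ _ _ _ _ ?g")
proof -
  have f: "bij_betw f V' (subdiv_V T' P')"
    and adj: "\<forall>p\<in>V'. \<forall>q\<in>V'. {p, q} \<in> E' \<longleftrightarrow> subdiv_adj T' ET' P' (f p) (f q)"
    and label: "\<forall>p\<in>V'. L p \<longleftrightarrow> is_Blk (f p)"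
    using repr unfolding subdiv_repr_def by auto
  have bij: "bij_betw ?g (V' \<union> N) (subdiv_V T P)"
    using bij_betw_extend_rho[OF f h disj] .
  have f_in: "f p \<in> subdiv_V T' P'" if "p \<in> V'" for p
    using f that by (rule bij_betw_apply)
  have no_E': "{p, q} \<notin> E'" if "q \<in> N" for p q
    using is_graph_edgeD[OF graph'] that disj by blast
  have edges: "{p, q} \<in> E' \<union> F \<longleftrightarrow> subdiv_adj T ET P (?g p) (?g q)"
    if pq: "p \<in> V' \<union> N" "q \<in> V' \<union> N" for p q
  proof -
    consider "p \<in> V'" "q \<in> V'" | "p \<in> V'" "q \<in> N" | "p \<in> N" "q \<in> V'" | "p \<in> N" "q \<in> N"
      using pq by blast
    then show ?thesis
    proof cases
      case 1
      then show ?thesis using adj old adj_rho f_in disj by auto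
    next
      case 2
      then show ?thesis using cross no_E' disj by auto
    next
      case 3
      have "{p, q} \<in> E' \<union> F \<longleftrightarrow> {q, p} \<in> E' \<union> F" by (simp add: insert_commute)
      also have "\<dots> \<longleftrightarrow> subdiv_adj T ET P (rho (f q)) (h p)" using 3 cross no_E' by auto
      moreover have "q \<notin> N" using 3 disj by blast
      ultimately show ?thesis using 3 subdiv_adj_sym[of T ET P "rho (f q)" "h p"] by simp
    next
      case 4
      then show ?thesis using new no_E' by auto
    qed
  qed
  have "L2 p \<longleftrightarrow> is_Blk (?g p)" if "p \<in> V' \<union> N" for p
    using that label label_old label_new is_Blk_rho disj by auto
  then show ?thesis unfolding subdiv_repr_def using bij edges by blast
qed

lemma subdiv_repr_attach_op1:
  assumes A: "A \<noteq> {w}" and repr: "subdiv_repr T' ET' P' V' E' L f" and graph': "is_graph V' E'"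
    and z0: "z0 \<in> V'" "f z0 = Blk v A0"
    and fresh: "a \<notin> V'" "b \<notin> V'" "c \<notin> V'" "a \<noteq> b" "a \<noteq> c" "b \<noteq> c"
  shows "\<exists>g. subdiv_repr T ET P (V' \<union> {a, b, c}) (E' \<union> {{z0, a}, {a, b}, {b, c}})
    (L(a := True, b := False, c := False)) g"
proof -
  define h where "h p = (if p = a then Blk w {v} else if p = b then Orig w else Leaf w)" for p
  have "pendant = {Blk w {v}, Orig w, Leaf w}" using A unfolding pendant_def by auto
  then have h: "bij_betw h {a, b, c} pendant"
    unfolding h_def bij_betw_def inj_on_def using fresh by auto
  have "subdiv_repr T ET P (V' \<union> {a, b, c}) (E' \<union> {{z0, a}, {a, b}, {b, c}})
      (L(a := True, b := False, c := False)) (\<lambda>p. if p \<in> {a, b, c} then h p else rho (f p))"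
  proof (rule subdiv_repr_extend[OF repr graph' h])
    show "V' \<inter> {a, b, c} = {}" using fresh by simp
  next
    fix p q assume "p \<in> V'" "q \<in> V'"
    then show "{p, q} \<notin> {{z0, a}, {a, b}, {b, c}}" using fresh by (auto simp: doubleton_eq_iff)
  next
    fix p q assume p: "p \<in> V'" and q: "q \<in> {a, b, c}"
    have "rho (f p) = Blk v A \<longleftrightarrow> p = z0"
      using subdiv_repr_reduced_inj[OF repr p z0(1)] z0(2) by (simp add: lift_block_def)
    then show "{p, q} \<in> {{z0, a}, {a, b}, {b, c}} \<longleftrightarrow> subdiv_adj T ET P (rho (f p)) (h q)"
      using q p fresh adj_pendant_outside[OF subdiv_repr_rho_outside[OF repr p]]
      by (auto simp: h_def doubleton_eq_iff)
  next
    fix p q assume "p \<in> {a, b, c}" "q \<in> {a, b, c}"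
    then show "{p, q} \<in> {{z0, a}, {a, b}, {b, c}} \<longleftrightarrow> subdiv_adj T ET P (h p) (h q)"
      using fresh z0(1) v_ne_w by (auto simp: h_def adj_Leaf_w adj_Orig_w adj_Blk_w doubleton_eq_iff)
  next
    fix p assume "p \<in> V'"
    then show "(L(a := True, b := False, c := False)) p = L p" using fresh by auto
  next
    fix p assume "p \<in> {a, b, c}"
    then show "(L(a := True, b := False, c := False)) p \<longleftrightarrow> is_Blk (h p)"
      using fresh by (auto simp: h_def)
  qed
  then show ?thesis by blast
qed

lemma subdiv_repr_attach_op2:
  assumes A: "A = {w}" and repr: "subdiv_repr T' ET' P' V' E' L f" and graph': "is_graph V' E'"
    and y0: "y0 \<in> V'" "f y0 = Orig v"
    and fresh: "a \<notin> V'" "b \<notin> V'" "c \<notin> V'" "d \<notin> V'"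
      "a \<noteq> b" "a \<noteq> c" "a \<noteq> d" "b \<noteq> c" "b \<noteq> d" "c \<noteq> d"
  shows "\<exists>g. subdiv_repr T ET P (V' \<union> {a, b, c, d}) (E' \<union> {{a, b}, {b, c}, {c, d}, {d, y0}})
    (L(a := False, b := False, c := True, d := True)) g"
proof -
  define h where "h p = (if p = a then Leaf w else if p = b then Orig w
    else if p = c then Blk w {v} else Blk v A)" for p
  have "pendant = {Leaf w, Orig w, Blk w {v}, Blk v A}" using A unfolding pendant_def by auto
  then have h: "bij_betw h {a, b, c, d} pendant"
    unfolding h_def bij_betw_def inj_on_def using fresh v_ne_w by auto
  have "subdiv_repr T ET P (V' \<union> {a, b, c, d}) (E' \<union> {{a, b}, {b, c}, {c, d}, {d, y0}})
      (L(a := False, b := False, c := True, d := True))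
      (\<lambda>p. if p \<in> {a, b, c, d} then h p else rho (f p))"
  proof (rule subdiv_repr_extend[OF repr graph' h])
    show "V' \<inter> {a, b, c, d} = {}" using fresh by simp
  next
    fix p q assume "p \<in> V'" "q \<in> V'"
    then show "{p, q} \<notin> {{a, b}, {b, c}, {c, d}, {d, y0}}" using fresh by (auto simp: doubleton_eq_iff)
  next
    fix p q assume p: "p \<in> V'" and q: "q \<in> {a, b, c, d}"
    have out: "rho (f p) \<notin> pendant" using subdiv_repr_rho_outside[OF repr p] .
    then have "rho (f p) \<noteq> Blk v A" using A pendant_iff by blast
    moreover have "rho (f p) = Orig v \<longleftrightarrow> p = y0"
      using subdiv_repr_reduced_inj[OF repr p y0(1)] y0(2) by simp
    ultimately show "{p, q} \<in> {{a, b}, {b, c}, {c, d}, {d, y0}} \<longleftrightarrow> subdiv_adj T ET P (rho (f p)) (h q)"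
      using q p fresh adj_pendant_outside[OF out] A by (auto simp: h_def doubleton_eq_iff)
  next
    fix p q assume "p \<in> {a, b, c, d}" "q \<in> {a, b, c, d}"
    then show "{p, q} \<in> {{a, b}, {b, c}, {c, d}, {d, y0}} \<longleftrightarrow> subdiv_adj T ET P (h p) (h q)"
      using fresh y0(1) v_ne_w adj_Blk_v[OF A]
      by (auto simp: h_def adj_Leaf_w adj_Orig_w adj_Blk_w doubleton_eq_iff)
  next
    fix p assume "p \<in> V'"
    then show "(L(a := False, b := False, c := True, d := True)) p = L p" using fresh by auto
  next
    fix p assume "p \<in> {a, b, c, d}"
    then show "(L(a := False, b := False, c := True, d := True)) p \<longleftrightarrow> is_Blk (h p)"
      using fresh by (auto simp: h_def)
  qed
  then show ?thesis by blast
qed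

lemma subdiv_repr_lift:
  assumes lab: "(V', E', L) \<in> famO_lab" and repr: "subdiv_repr T' ET' P' V' E' L f"
  shows "\<exists>V E L f. (V, E, L) \<in> famO_lab \<and> subdiv_repr T ET P V E L f"
proof -
  have fin: "finite V'" and graph': "is_graph V' E'" using famO_lab_graph[OF lab] by auto
  have f: "bij_betw f V' (subdiv_V T' P')"
    and adj: "\<forall>p\<in>V'. \<forall>q\<in>V'. {p, q} \<in> E' \<longleftrightarrow> subdiv_adj T' ET' P' (f p) (f q)"
    and label: "\<forall>p\<in>V'. L p \<longleftrightarrow> is_Blk (f p)"
    using repr unfolding subdiv_repr_def by auto
  define a b c d where "a = Max V' + 1" and "b = Max V' + 2" and "c = Max V' + 3" and "d = Max V' + 4"
  have fresh: "a \<notin> V'" "b \<notin> V'" "c \<notin> V'" "d \<notin> V'"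
    "a \<noteq> b" "a \<noteq> c" "a \<noteq> d" "b \<noteq> c" "b \<noteq> d" "c \<noteq> d"
    using notin_above_Max[OF fin] unfolding a_def b_def c_def d_def by auto
  have v': "v \<in> T'" using v_in v_ne_w by (simp add: T'_def)
  then have "Leaf v \<in> f ` V'" "Orig v \<in> f ` V'"
    using bij_betw_imp_surj_on[OF f] by simp_all
  then obtain x0 y0 where xy: "x0 \<in> V'" "f x0 = Leaf v" "y0 \<in> V'" "f y0 = Orig v"
    by (metis imageE)
  then have xy_edge: "{x0, y0} \<in> E'" "\<not> L x0" "\<not> L y0"
    using adj label v' by (auto simp: subdiv_adj_def)
  show ?thesis
  proof (cases "A = {w}")
    case True
    \<comment> \<open>O2 at the edge y0 - x0, that is v - (v,1)\<close>
    have "(V' \<union> {a, b, c, d}, E' \<union> {{a, b}, {b, c}, {c, d}, {d, y0}},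
        L(a := False, b := False, c := True, d := True)) \<in> famO_lab"
      using fresh xy xy_edge by (intro famO_lab.op2[OF lab, of y0 x0]) (auto simp: insert_commute)
    then show ?thesis using subdiv_repr_attach_op2[OF True repr graph' xy(3,4) fresh] by blast
  next
    case False
    \<comment> \<open>O1 at the path x0 - y0 - z0, that is (v,1) - v - (v, A - {w})\<close>
    then have A0: "A0 \<in> P' v" using w_in_A blocks_reduced_v by (auto simp: A0_def)
    then have "Blk v A0 \<in> f ` V'" using bij_betw_imp_surj_on[OF f] v' by simp
    then obtain z0 where z0: "z0 \<in> V'" "f z0 = Blk v A0" by (metis imageE)
    then have "{y0, z0} \<in> E'" "L z0" using adj label xy v' A0 by (auto simp: subdiv_adj_def)
    then have "(V' \<union> {a, b, c}, E' \<union> {{z0, a}, {a, b}, {b, c}}, L(a := True, b := False, c := False))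
        \<in> famO_lab"
      using fresh xy xy_edge z0 by (intro famO_lab.op1[OF lab, of x0 y0 z0]) auto
    then show ?thesis using subdiv_repr_attach_op1[OF False repr graph' z0 fresh(1-3,5,6,8)] by blast
  qed
qed

end

lemma subdiv_repr_exists:
  assumes "is_tree T ET" "card T \<ge> 2" "\<forall>x\<in>T. is_partition (P x) (nbhd ET x)"
  shows "\<exists>V E L f. (V, E, L) \<in> famO_lab \<and> subdiv_repr T ET P V E L f"
  using assms
proof (induction "card T" arbitrary: T ET P rule: less_induct)
  case less
  show ?case
  proof (cases "card T = 2")
    case True
    then show ?thesis using subdiv_repr_edge less.prems by blast
  next
    case False
    obtain w v where wv: "w \<in> T" "v \<in> T" "v \<noteq> w" "nbhd ET w = {v}"
      using tree_has_leaf[OF less.prems(1,2)] by blast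
    have "w \<in> nbhd ET v" using wv(4) nbhd_sym[of w ET v] by simp
    then obtain A where "A \<in> P v" "w \<in> A"
      using is_partition_block_exists[OF bspec[OF less.prems(3) wv(2)]] by blast
    then interpret pendant_leaf T ET P w v A
      using less.prems(1,3) wv by unfold_locales
    have "\<exists>V E L f. (V, E, L) \<in> famO_lab \<and> subdiv_repr T' ET' P' V E L f"
      using less.hyps[of T' ET' P'] less.prems(2) False card_reduced tree_reduced partition_reduced
      by simp
    then show ?thesis using subdiv_repr_lift by blast
  qed
qed

lemma in_famO'_imp_in_famO: "in_famO' V E \<Longrightarrow> in_famO V E"
proof -
  assume "in_famO' V E"
  then obtain T :: "nat set" and ET P where tree: "is_tree V E" "is_tree T ET" "card T \<ge> 2"
    and part: "\<forall>v\<in>T. is_partition (P v) (nbhd ET v)"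
    and iso: "graph_iso (subdiv_V T P) (subdiv_E T ET P) V E"
    unfolding in_famO'_def by blast
  obtain V' E' L f where lab: "(V', E', L) \<in> famO_lab" and repr: "subdiv_repr T ET P V' E' L f"
    using subdiv_repr_exists[OF tree(2,3) part] by blast
  have "graph_iso V' E' V E"
    using graph_iso_of_subdiv_repr[OF repr _ iso] famO_lab_graph[OF lab] by blast
  then show ?thesis unfolding in_famO_def using tree(1) lab by blast
qed

section \<open>The path P10\<close>

lemma P10_eq:
  "P10_V = {0, 1, 2, 3, 4, 5, 6, 7, 8, 9}"
  "P10_E = {{0, 1}, {1, 2}, {2, 3}, {3, 4}, {4, 5}, {5, 6}, {6, 7}, {7, 8}, {8, 9}}"
proof -
  show "P10_V = {0, 1, 2, 3, 4, 5, 6, 7, 8, 9}"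
    unfolding P10_V_def by (simp add: atLeast0AtMost atMost_nat_numeral atMost_Suc insert_commute)
  have "P10_E = (\<lambda>i. {i, Suc i}) ` {..<9}" unfolding P10_E_def by blast
  also have "{..<9::nat} = {0, 1, 2, 3, 4, 5, 6, 7, 8}"
    by (simp add: lessThan_nat_numeral lessThan_Suc insert_commute)
  finally show "P10_E = {{0, 1}, {1, 2}, {2, 3}, {3, 4}, {4, 5}, {5, 6}, {6, 7}, {7, 8}, {8, 9}}"
    by (simp add: eval_nat_numeral)
qed

lemma P10_tree: "is_tree P10_V P10_E"
proof -
  let ?R = "{(a, b). {a, b} \<in> P10_E}"
  have edge: "(i, Suc i) \<in> ?R" "(Suc i, i) \<in> ?R" if "i < 9" for i
  proof -
    have "{i, Suc i} \<in> P10_E" unfolding P10_E_def using that by blast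
    then show "(i, Suc i) \<in> ?R" "(Suc i, i) \<in> ?R" by (simp_all add: insert_commute)
  qed
  have path: "(i, j) \<in> ?R\<^sup>* \<and> (j, i) \<in> ?R\<^sup>*" if "i \<le> j" "j \<le> 9" for i j
    using that
  proof (induction j)
    case (Suc j)
    show ?case
    proof (cases "i = Suc j")
      case False
      then have "(i, j) \<in> ?R\<^sup>* \<and> (j, i) \<in> ?R\<^sup>*" using Suc by simp
      then show ?thesis using edge[of j] Suc.prems
        by (meson Suc_le_lessD converse_rtrancl_into_rtrancl rtrancl_into_rtrancl)
    qed simp
  qed simp
  have "connected_graph P10_V P10_E"
    unfolding connected_graph_def
  proof (intro ballI)
    fix u v assume "u \<in> P10_V" "v \<in> P10_V"
    then have "u \<le> 9" "v \<le> 9" unfolding P10_V_def by auto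
    then show "(u, v) \<in> ?R\<^sup>*" using path[of u v] path[of v u] by (cases "u \<le> v") auto
  qed
  moreover have "is_graph P10_V P10_E" unfolding P10_eq
    by (intro is_graph_insert_edge is_graph_empty) auto
  moreover have "card P10_E + 1 = card P10_V" unfolding P10_eq by (simp add: doubleton_eq_iff)
  ultimately show ?thesis unfolding is_tree_def by (simp add: P10_V_def)
qed

lemma P10_in_famO: "in_famO P10_V P10_E"
proof -
  let ?V = "{0, 1, 2, 3, 4, 5} \<union> {6, 7, 8, 9::nat}"
  let ?E = "{{0, 1}, {1, 2}, {2, 3}, {3, 4}, {4, 5}} \<union> {{6, 7}, {7, 8}, {8, 9}, {9, 0::nat}}"
  have "(?V, ?E, (\<lambda>i::nat. i = 2 \<or> i = 3)(6 := False, 7 := False, 8 := True, 9 := True)) \<in> famO_lab"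
    by (rule famO_lab.op2[OF famO_lab.base[unfolded P6_lab_eq], where x = 0 and y = 1]) auto
  moreover have "graph_iso ?V ?E P10_V P10_E"
    unfolding graph_iso_def
  proof (intro conjI exI)
    \<comment> \<open>O2 hangs 6-7-8-9 on the end 0 of P6, giving the path 6-7-8-9-0-1-2-3-4-5\<close>
    let ?f = "\<lambda>i::nat. if 6 \<le> i then i - 6 else i + 4"
    show "is_graph ?V ?E"
      unfolding Un_insert_left Un_empty_left by (intro is_graph_insert_edge is_graph_empty) auto
    show "is_graph P10_V P10_E" using P10_tree unfolding is_tree_def by simp
    show "bij_betw ?f ?V P10_V" unfolding P10_eq bij_betw_def inj_on_def by auto
    show "\<forall>u\<in>?V. \<forall>v\<in>?V. {u, v} \<in> ?E \<longleftrightarrow> {?f u, ?f v} \<in> P10_E"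
      unfolding P10_eq by (simp add: doubleton_eq_iff)
  qed
  ultimately show ?thesis unfolding in_famO_def using P10_tree by blast
qed

lemma P10_inner_vertex:
  assumes "k \<in> P10_V" "k \<notin> {0, 9}"
  shows "{k, k - 1} \<in> P10_E" "{k, k + 1} \<in> P10_E" "k - 1 \<in> P10_V" "k + 1 \<in> P10_V"
proof -
  have k: "1 \<le> k" "k \<le> 8" using assms unfolding P10_V_def by auto
  show "{k, k - 1} \<in> P10_E" unfolding P10_E_def using k
    by (auto intro!: exI[of _ "k - 1"] simp: insert_commute)
  show "{k, k + 1} \<in> P10_E" unfolding P10_E_def using k by auto
  show "k - 1 \<in> P10_V" "k + 1 \<in> P10_V" unfolding P10_V_def using k by auto
qed

lemma subdiv_iso_P10_Leaf:
  assumes \<phi>: "bij_betw \<phi> (subdiv_V T P) P10_V"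
    and edges: "\<forall>X\<in>subdiv_V T P. \<forall>Y\<in>subdiv_V T P. {X, Y} \<in> subdiv_E T ET P \<longleftrightarrow> {\<phi> X, \<phi> Y} \<in> P10_E"
    and "t \<in> T"
  shows "\<phi> (Leaf t) \<in> {0, 9}"
proof (rule ccontr)
  define k where "k = \<phi> (Leaf t)"
  assume "\<phi> (Leaf t) \<notin> {0, 9}"
  moreover have L: "Leaf t \<in> subdiv_V T P" using \<open>t \<in> T\<close> by simp
  moreover have "k \<in> P10_V" using \<phi> L unfolding k_def bij_betw_def by blast
  ultimately have k: "{k, k - 1} \<in> P10_E" "{k, k + 1} \<in> P10_E" "k - 1 \<in> P10_V" "k + 1 \<in> P10_V"
    using P10_inner_vertex unfolding k_def by blast+
  have only_Orig: "X = Orig t" if "X \<in> subdiv_V T P" "{k, \<phi> X} \<in> P10_E" for X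
    using edges L that subdiv_E_iff subdiv_adj_Leaf unfolding k_def by metis
  obtain X Y where "X \<in> subdiv_V T P" "\<phi> X = k - 1" "Y \<in> subdiv_V T P" "\<phi> Y = k + 1"
    using k(3,4) \<phi> unfolding bij_betw_def by (metis imageE)
  then have "k - 1 = k + 1" using only_Orig k(1,2) by metis
  then show False by simp
qed

lemma P10_not_in_famO': "\<not> in_famO' P10_V P10_E"
proof
  assume "in_famO' P10_V P10_E"
  then obtain T :: "nat set" and ET P where tree: "is_tree T ET" and two: "card T \<ge> 2"
    and part: "\<forall>v\<in>T. is_partition (P v) (nbhd ET v)"
    and iso: "graph_iso (subdiv_V T P) (subdiv_E T ET P) P10_V P10_E"
    unfolding in_famO'_def by blast
  obtain \<phi> where \<phi>: "bij_betw \<phi> (subdiv_V T P) P10_V"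
    and edges: "\<forall>X\<in>subdiv_V T P. \<forall>Y\<in>subdiv_V T P. {X, Y} \<in> subdiv_E T ET P \<longleftrightarrow> {\<phi> X, \<phi> Y} \<in> P10_E"
    using iso unfolding graph_iso_def by blast
  have "inj_on (\<phi> \<circ> Leaf) T"
    using bij_betw_imp_inj_on[OF \<phi>] unfolding inj_on_def by (metis comp_apply sv.inject(2) subdiv_V_simps(2))
  moreover have "(\<phi> \<circ> Leaf) ` T \<subseteq> {0, 9}"
    using subdiv_iso_P10_Leaf[OF \<phi> edges] by (intro image_subsetI) simp
  ultimately have "card T \<le> 2"
    using card_inj_on_le[of "\<phi> \<circ> Leaf" T "{0, 9}"] by simp
  then obtain u w where uw: "T = {u, w}" "u \<noteq> w"
    using two card_2_iff[of T] by (metis le_antisym)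
  have "card (subdiv_V T P) \<le> 6"
    unfolding subdiv_of_edge(4)[OF tree uw part]
    using card_length[of "[Leaf u, Orig u, Blk u {w}, Blk w {u}, Orig w, Leaf w]"] by simp
  moreover have "card (subdiv_V T P) = 10"
    using bij_betw_same_card[OF \<phi>] unfolding P10_eq by simp
  ultimately show False by simp
qed

theorem mainTheorem4:
  shows "(\<forall>(V :: 'a set) E. in_famO' V E \<longrightarrow> in_famO V E)
         \<and> in_famO P10_V P10_E \<and> \<not> in_famO' P10_V P10_E"
  using in_famO'_imp_in_famO P10_in_famO P10_not_in_famO' by blast

end
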